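(* Let $\kappa>-1$, $\Gamma$ a constant real $n\times r$ matrix, and assume that $\kappa=1$ or $\Gamma=0$. Then the equations $$\dot X=P-(1+2\kappa)XP^TX,\qquad \dot P=(1+2\kappa)PX^TP-\Gamma+X\Lambda,\qquad \Lambda=\tfrac12\left(-2P^TP+X^T\Gamma+\Gamma^TX\right)$$ on $T^*V(n,r)$ are equivalent to the matrix equations $$\frac{d}{dt}L(\lambda)=[L(\lambda),A(\lambda)]$$ with spectral parameter $\lambda$, where $L(\lambda),A(\lambda)\in so(n+r)$ are $$L(\lambda)=\begin{pmatrix}-\lambda\Phi & X+\lambda^2\Gamma\\ -X^T-\lambda^2\Gamma^T & \lambda\kappa\Psi\end{pmatrix},\qquad A(\lambda)=\begin{pmatrix}-\Phi & \lambda\Gamma\\ -\lambda\Gamma^T & \kappa\Psi\end{pmatrix},$$ with $\Phi=PX^T-XP^T$ and $\Psi=X^TP-P^TX$.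
   Context: $V(n,r)=\{X\in M_{n,r}(\mathbb R):X^TX=\mathbf I_r\}$, and $T^*V(n,r)$ is realized as the set of pairs $(X,P)$ of real $n\times r$ matrices with $X^TX=\mathbf I_r$, $X^TP+P^TX=0$. The given equations are the Hamiltonian flow of the pendulum Hamiltonian $\frac12\operatorname{tr}(P^TP)-\frac{1+2\kappa}{2}\operatorname{tr}((XP^T)^2)+\operatorname{tr}(X^T\Gamma)$ (for $\Gamma=0$, the geodesic flow of the Jensen metric $ds^2_\kappa$). *)

theory Defs
  imports "HOL-Analysis.Analysis"
begin

text \<open>Matrices are rendered as real^'c^'r (rows indexed by 'r, columns by 'c).
  An (n+r)x(n+r) block matrix is indexed by the sum type 'n + 'r.\<close>

definition blockmat ::
  "real^'r^'n \<Rightarrow> real^'c^'n \<Rightarrow> real^'r^'c \<Rightarrow> real^'c^'c \<Rightarrow> real^('r + 'c)^('n + 'c)"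
  where "blockmat A B C D = (\<chi> i j. (case i of
            Inl a \<Rightarrow> (case j of Inl b \<Rightarrow> A $ a $ b | Inr b \<Rightarrow> B $ a $ b)
          | Inr a \<Rightarrow> (case j of Inl b \<Rightarrow> C $ a $ b | Inr b \<Rightarrow> D $ a $ b)))"

text \<open>Cotangent bundle of the Stiefel manifold V(n,r), realized as pairs (X,P).\<close>
definition in_TStiefel :: "real^'r^'n \<Rightarrow> real^'r^'n \<Rightarrow> bool"
  where "in_TStiefel X P \<longleftrightarrow> transpose X ** X = mat 1 \<and> transpose X ** P + transpose P ** X = 0"

definition Phi_mat :: "real^'r^'n \<Rightarrow> real^'r^'n \<Rightarrow> real^'n^'n"
  where "Phi_mat X P = P ** transpose X - X ** transpose P"

definition Psi_mat :: "real^'r^'n \<Rightarrow> real^'r^'n \<Rightarrow> real^'r^'r"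
  where "Psi_mat X P = transpose X ** P - transpose P ** X"

definition Lax_L :: "real \<Rightarrow> real^'r^'n \<Rightarrow> real \<Rightarrow> real^'r^'n \<Rightarrow> real^'r^'n \<Rightarrow> real^('n + 'r)^('n + 'r)"
  where "Lax_L \<kappa> \<Gamma> lam X P = blockmat (- (lam *\<^sub>R Phi_mat X P)) (X + lam\<^sup>2 *\<^sub>R \<Gamma>)
            (- transpose X - lam\<^sup>2 *\<^sub>R transpose \<Gamma>) ((lam * \<kappa>) *\<^sub>R Psi_mat X P)"

definition Lax_A :: "real \<Rightarrow> real^'r^'n \<Rightarrow> real \<Rightarrow> real^'r^'n \<Rightarrow> real^'r^'n \<Rightarrow> real^('n + 'r)^('n + 'r)"
  where "Lax_A \<kappa> \<Gamma> lam X P = blockmat (- Phi_mat X P) (lam *\<^sub>R \<Gamma>)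
            (- (lam *\<^sub>R transpose \<Gamma>)) (\<kappa> *\<^sub>R Psi_mat X P)"

end

theory Submission
  imports Defs
begin

text \<open>Differentiating the entries of
  L(\<lambda>) and comparing coefficients of \<lambda> with those of [L(\<lambda>), A(\<lambda>)] turns
  the Lax equation into three block equations: the X-equation itself, and prescribed
  derivatives of \<Phi> and \<kappa>\<Psi>. On T*V(n,r) the pendulum flow satisfies all three, using
  X^T X = 1 and X^T P = - P^T X; for the \<kappa>\<Psi> block one needs \<kappa> = 1 or \<Gamma> = 0.
  Conversely, the derivative of P is pinned down by the \<Phi>-equation together with the
  differentiated constraint X^T P + P^T X = 0, because a tangent vector Q at X with
  Q X^T = X Q^T vanishes.\<close>

interpretation matrix_mult: bounded_bilinear "(**) :: real^'n^'m \<Rightarrow> real^'p^'n \<Rightarrow> real^'p^'m"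
  unfolding bilinear_conv_bounded_bilinear[symmetric] bilinear_def
  by (auto intro!: linearI simp: matrix_matrix_mult_def vec_eq_iff sum.distrib sum_distrib_left algebra_simps)

lemma linear_transpose: "linear (transpose :: real^'n^'m \<Rightarrow> real^'m^'n)"
  by (rule linearI) (simp_all add: transpose_def vec_eq_iff)

lemmas matrix_algebra =
  matrix_mult.add_left matrix_mult.add_right matrix_mult.diff_left matrix_mult.diff_right
  matrix_mult.minus_left matrix_mult.minus_right matrix_mult.scaleR_left matrix_mult.scaleR_right
  linear_add[OF linear_transpose] linear_diff[OF linear_transpose] linear_neg[OF linear_transpose]
  transpose_scalar matrix_transpose_mul matrix_mul_assoc[symmetric]

lemma has_vector_derivative_transpose:
  fixes f :: "real \<Rightarrow> real^'n^'m"
  assumes "(f has_vector_derivative f') F"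
  shows "((\<lambda>s. transpose (f s)) has_vector_derivative transpose f') F"
proof -
  have "bounded_linear (transpose :: real^'n^'m \<Rightarrow> real^'m^'n)"
    using linear_conv_bounded_linear linear_transpose by blast
  from bounded_linear.has_vector_derivative[OF this assms] show ?thesis .
qed

lemma has_vector_derivative_at_iff_eq:
  "(f has_vector_derivative f') (at t) \<Longrightarrow> (f has_vector_derivative g) (at t) \<longleftrightarrow> g = f'"
  using vector_derivative_unique_at by blast

lemma blockmat_eq_iff:
  "blockmat A B C D = blockmat A' B' C' D' \<longleftrightarrow> A = A' \<and> B = B' \<and> C = C' \<and> D = D'"
proof
  assume "blockmat A B C D = blockmat A' B' C' D'"
  then have "blockmat A B C D $ i $ j = blockmat A' B' C' D' $ i $ j" for i j
    by simp
  from this[of "Inl _" "Inl _"] this[of "Inl _" "Inr _"] this[of "Inr _" "Inl _"] this[of "Inr _" "Inr _"]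
  show "A = A' \<and> B = B' \<and> C = C' \<and> D = D'"
    by (simp add: blockmat_def vec_eq_iff)
qed simp

lemma blockmat_diff:
  "blockmat A B C D - blockmat A' B' C' D' = blockmat (A - A') (B - B') (C - C') (D - D')"
  by (simp add: blockmat_def vec_eq_iff split: sum.split)

lemma blockmat_mult:
  fixes A :: "real^'a^'a" and B :: "real^'b^'a" and C :: "real^'a^'b" and D :: "real^'b^'b"
  shows "blockmat A B C D ** blockmat A' B' C' D' =
    blockmat (A ** A' + B ** C') (A ** B' + B ** D') (C ** A' + D ** C') (C ** B' + D ** D')"
proof -
  have UNIV_sum: "(UNIV :: ('a + 'b) set) = UNIV <+> UNIV"
    by simp
  show ?thesis
    unfolding blockmat_def matrix_matrix_mult_def vec_eq_iff
    by (simp only: UNIV_sum sum.Plus[OF finite finite]) (auto split: sum.split)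
qed

lemma bounded_linear_blockmat: "bounded_linear (\<lambda>(A, B, C, D). blockmat A B C D)"
  unfolding linear_conv_bounded_linear[symmetric]
  by (rule linearI) (auto simp: blockmat_def vec_eq_iff split: sum.split)

lemma has_vector_derivative_blockmat:
  assumes "(A has_vector_derivative A') (at t)" "(B has_vector_derivative B') (at t)"
    and "(C has_vector_derivative C') (at t)" "(D has_vector_derivative D') (at t)"
  shows "((\<lambda>s. blockmat (A s) (B s) (C s) (D s)) has_vector_derivative blockmat A' B' C' D') (at t)"
  using bounded_linear.has_vector_derivative[OF bounded_linear_blockmat
      has_vector_derivative_Pair[OF assms(1) has_vector_derivative_Pair[OF assms(2)
        has_vector_derivative_Pair[OF assms(3,4)]]]]
  by simp

lemma bounded_bilinear_Phi_mat: "bounded_bilinear (Phi_mat :: real^'r^'n \<Rightarrow> _)"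
  unfolding bilinear_conv_bounded_bilinear[symmetric] bilinear_def
  by (auto intro!: linearI simp: Phi_mat_def matrix_algebra algebra_simps)

lemma bounded_bilinear_Psi_mat: "bounded_bilinear (Psi_mat :: real^'r^'n \<Rightarrow> _)"
  unfolding bilinear_conv_bounded_bilinear[symmetric] bilinear_def
  by (auto intro!: linearI simp: Psi_mat_def matrix_algebra algebra_simps)

lemma Lax_commutator:
  "Lax_L \<kappa> \<Gamma> lam X P ** Lax_A \<kappa> \<Gamma> lam X P - Lax_A \<kappa> \<Gamma> lam X P ** Lax_L \<kappa> \<Gamma> lam X P =
    blockmat (- (lam *\<^sub>R Phi_mat \<Gamma> X))
      (\<kappa> *\<^sub>R (X ** Psi_mat X P) + Phi_mat X P ** X)
      (- transpose (\<kappa> *\<^sub>R (X ** Psi_mat X P) + Phi_mat X P ** X))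
      (- (lam *\<^sub>R Psi_mat X \<Gamma>))"
  unfolding Lax_L_def Lax_A_def blockmat_mult blockmat_diff blockmat_eq_iff Phi_mat_def Psi_mat_def
  by (simp add: matrix_algebra algebra_simps power2_eq_square)

lemma has_vector_derivative_Lax_L:
  assumes X: "(X has_vector_derivative X') (at t)" and P: "(P has_vector_derivative P') (at t)"
  shows "((\<lambda>s. Lax_L \<kappa> \<Gamma> lam (X s) (P s)) has_vector_derivative
    blockmat (- (lam *\<^sub>R (Phi_mat (X t) P' + Phi_mat X' (P t)))) X' (- transpose X')
      ((lam * \<kappa>) *\<^sub>R (Psi_mat (X t) P' + Psi_mat X' (P t)))) (at t)"
  unfolding Lax_L_def
  by (intro has_vector_derivative_blockmat has_vector_derivative_minus has_vector_derivative_transpose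
        has_vector_derivative_add_const[THEN iffD2] has_vector_derivative_diff_const[THEN iffD2] X
        bounded_linear.has_vector_derivative[OF bounded_linear_scaleR_right]
        bounded_bilinear.has_vector_derivative[OF bounded_bilinear_Phi_mat X P]
        bounded_bilinear.has_vector_derivative[OF bounded_bilinear_Psi_mat X P])

lemma Lax_equation_iff_blocks:
  "(\<forall>lam. Lax_L \<kappa> \<Gamma> lam X P ** Lax_A \<kappa> \<Gamma> lam X P - Lax_A \<kappa> \<Gamma> lam X P ** Lax_L \<kappa> \<Gamma> lam X P =
      blockmat (- (lam *\<^sub>R \<Phi>')) X' (- transpose X') ((lam * \<kappa>) *\<^sub>R \<Psi>'))
   \<longleftrightarrow> \<Phi>' = Phi_mat \<Gamma> X \<and> X' = \<kappa> *\<^sub>R (X ** Psi_mat X P) + Phi_mat X P ** X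
       \<and> \<kappa> *\<^sub>R \<Psi>' = - Psi_mat X \<Gamma>"
  \<comment> \<open>Every block is linear in \<open>lam\<close>, so the instance \<open>lam = 1\<close> already determines it.\<close>
  unfolding Lax_commutator blockmat_eq_iff
  by (metis (no_types, lifting) minus_equation_iff scaleR_one scaleR_scaleR scaleR_minus_right mult.commute)

definition sym_product :: "real^'r^'n \<Rightarrow> real^'r^'n \<Rightarrow> real^'r^'r"
  where "sym_product X P = transpose X ** P + transpose P ** X"

lemma bounded_bilinear_sym_product: "bounded_bilinear (sym_product :: real^'r^'n \<Rightarrow> _)"
  unfolding bilinear_conv_bounded_bilinear[symmetric] bilinear_def
  by (auto intro!: linearI simp: sym_product_def matrix_algebra algebra_simps)

definition pendulum_Lambda :: "real^'r^'n \<Rightarrow> real^'r^'n \<Rightarrow> real^'r^'n \<Rightarrow> real^'r^'r"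
  where "pendulum_Lambda \<Gamma> X P =
    (1/2) *\<^sub>R (- 2 *\<^sub>R (transpose P ** P) + transpose X ** \<Gamma> + transpose \<Gamma> ** X)"

definition pendulum_X :: "real \<Rightarrow> real^'r^'n \<Rightarrow> real^'r^'n \<Rightarrow> real^'r^'n"
  where "pendulum_X \<kappa> X P = P - (1 + 2 * \<kappa>) *\<^sub>R (X ** transpose P ** X)"

definition pendulum_P :: "real \<Rightarrow> real^'r^'n \<Rightarrow> real^'r^'n \<Rightarrow> real^'r^'n \<Rightarrow> real^'r^'n"
  where "pendulum_P \<kappa> \<Gamma> X P =
    (1 + 2 * \<kappa>) *\<^sub>R (P ** transpose X ** P) - \<Gamma> + X ** pendulum_Lambda \<Gamma> X P"

lemma pendulum_field_identities:
  fixes X P \<Gamma> :: "real^'r^'n"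
  assumes orth: "transpose X ** X = mat 1" and tangent: "sym_product X P = 0"
  shows "\<kappa> *\<^sub>R (X ** Psi_mat X P) + Phi_mat X P ** X = pendulum_X \<kappa> X P"
    and "Phi_mat X (pendulum_P \<kappa> \<Gamma> X P) + Phi_mat (pendulum_X \<kappa> X P) P = Phi_mat \<Gamma> X"
    and "Psi_mat X (pendulum_P \<kappa> \<Gamma> X P) + Psi_mat (pendulum_X \<kappa> X P) P = - Psi_mat X \<Gamma>"
    and "sym_product X (pendulum_P \<kappa> \<Gamma> X P) + sym_product (pendulum_X \<kappa> X P) P = 0"
proof -
  have XtP: "transpose X ** P = - (transpose P ** X)"
    using tangent by (simp add: sym_product_def eq_neg_iff_add_eq_0)
  have orth': "transpose X ** (X ** Y) = Y" for Y :: "real^'a^'r"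
    by (simp add: matrix_mul_assoc orth)
  have XtP': "transpose X ** (P ** Y) = - (transpose P ** (X ** Y))" for Y :: "real^'a^'r"
    by (simp add: matrix_mul_assoc XtP matrix_mult.minus_left)
  have two: "2 * A = 2 *\<^sub>R A" for A :: "real^'a^'b"
    by (simp add: vec_eq_iff)
  note rules = matrix_algebra orth orth' XtP XtP' two
  show "\<kappa> *\<^sub>R (X ** Psi_mat X P) + Phi_mat X P ** X = pendulum_X \<kappa> X P"
    unfolding pendulum_X_def Phi_mat_def Psi_mat_def by (simp add: rules algebra_simps)
  show "Phi_mat X (pendulum_P \<kappa> \<Gamma> X P) + Phi_mat (pendulum_X \<kappa> X P) P = Phi_mat \<Gamma> X"
    unfolding pendulum_X_def pendulum_P_def pendulum_Lambda_def Phi_mat_def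
    by (simp add: rules algebra_simps)
  show "Psi_mat X (pendulum_P \<kappa> \<Gamma> X P) + Psi_mat (pendulum_X \<kappa> X P) P = - Psi_mat X \<Gamma>"
    unfolding pendulum_X_def pendulum_P_def pendulum_Lambda_def Psi_mat_def
    by (simp add: rules algebra_simps)
  show "sym_product X (pendulum_P \<kappa> \<Gamma> X P) + sym_product (pendulum_X \<kappa> X P) P = 0"
    unfolding pendulum_X_def pendulum_P_def pendulum_Lambda_def sym_product_def
    by (simp add: rules algebra_simps)
qed

lemma tangent_eq_0_if_Phi_mat_eq_0:
  fixes X Q :: "real^'r^'n"
  assumes orth: "transpose X ** X = mat 1"
    and tangent: "sym_product X Q = 0" and Phi: "Phi_mat X Q = 0"
  shows "Q = 0"
proof -
  have "Q ** transpose X = X ** transpose Q"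
    using Phi by (simp add: Phi_mat_def)
  then have Q: "Q = X ** (transpose Q ** X)"
    by (metis orth matrix_mul_assoc matrix_mul_rid)
  then have "transpose X ** Q = transpose Q ** X"
    by (metis orth matrix_mul_assoc matrix_mul_lid)
  with tangent have "transpose Q ** X = 0"
    by (simp add: sym_product_def flip: scaleR_2)
  with Q show ?thesis
    by simp
qed

lemma pendulum_flow_iff_Lax_blocks:
  fixes X P \<Gamma> X' P' :: "real^'r^'n"
  assumes orth: "transpose X ** X = mat 1" and tangent: "sym_product X P = 0"
    and tangent': "sym_product X P' + sym_product X' P = 0"
    and integrable_case: "\<kappa> = 1 \<or> \<Gamma> = 0"
  shows "X' = pendulum_X \<kappa> X P \<and> P' = pendulum_P \<kappa> \<Gamma> X P \<longleftrightarrow>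
    Phi_mat X P' + Phi_mat X' P = Phi_mat \<Gamma> X
    \<and> X' = \<kappa> *\<^sub>R (X ** Psi_mat X P) + Phi_mat X P ** X
    \<and> \<kappa> *\<^sub>R (Psi_mat X P' + Psi_mat X' P) = - Psi_mat X \<Gamma>"
  (is "?flow \<longleftrightarrow> ?Lax")
proof
  assume ?flow
  moreover have "\<kappa> *\<^sub>R Psi_mat X \<Gamma> = Psi_mat X \<Gamma>"
    using integrable_case by (auto simp: bounded_bilinear.zero_right[OF bounded_bilinear_Psi_mat])
  ultimately show ?Lax
    using pendulum_field_identities[OF orth tangent] by simp
next
  assume Lax: ?Lax
  then have X': "X' = pendulum_X \<kappa> X P"
    using pendulum_field_identities(1)[OF orth tangent] by simp
  have "P' - pendulum_P \<kappa> \<Gamma> X P = 0"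
  proof (rule tangent_eq_0_if_Phi_mat_eq_0[OF orth])
    show "sym_product X (P' - pendulum_P \<kappa> \<Gamma> X P) = 0"
      using tangent' pendulum_field_identities(4)[OF orth tangent, of \<kappa> \<Gamma>]
      unfolding X' bounded_bilinear.diff_right[OF bounded_bilinear_sym_product]
      by (metis add_right_cancel diff_self)
    show "Phi_mat X (P' - pendulum_P \<kappa> \<Gamma> X P) = 0"
      using conjunct1[OF Lax] pendulum_field_identities(2)[OF orth tangent, of \<kappa> \<Gamma>]
      unfolding X' bounded_bilinear.diff_right[OF bounded_bilinear_Phi_mat]
      by (metis add_right_cancel diff_self)
  qed
  with X' show ?flow
    by simp
qed

theorem theorem4:
  fixes \<kappa> :: real and \<Gamma> :: "real^'r^'n"
    and X P :: "real \<Rightarrow> real^'r^'n"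
  assumes kappa: "\<kappa> > -1"
    and case_split: "\<kappa> = 1 \<or> \<Gamma> = 0"
    and on_TV: "\<forall>t. in_TStiefel (X t) (P t)"
    and X_diff: "\<forall>t. X differentiable (at t)"
    and P_diff: "\<forall>t. P differentiable (at t)"
  shows "(\<forall>t. (X has_vector_derivative
                  (P t - (1 + 2 * \<kappa>) *\<^sub>R (X t ** transpose (P t) ** X t))) (at t)
            \<and> (P has_vector_derivative
                  ((1 + 2 * \<kappa>) *\<^sub>R (P t ** transpose (X t) ** P t) - \<Gamma>
                   + X t ** ((1/2) *\<^sub>R (- 2 *\<^sub>R (transpose (P t) ** P t)
                        + transpose (X t) ** \<Gamma> + transpose \<Gamma> ** X t)))) (at t))
     \<longleftrightarrow>
     (\<forall>lam t. ((\<lambda>s. Lax_L \<kappa> \<Gamma> lam (X s) (P s)) has_vector_derivative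
               (Lax_L \<kappa> \<Gamma> lam (X t) (P t) ** Lax_A \<kappa> \<Gamma> lam (X t) (P t)
                - Lax_A \<kappa> \<Gamma> lam (X t) (P t) ** Lax_L \<kappa> \<Gamma> lam (X t) (P t))) (at t))"
proof -
  define X' where "X' t = vector_derivative X (at t)" for t
  define P' where "P' t = vector_derivative P (at t)" for t
  have X': "(X has_vector_derivative X' t) (at t)" for t
    using X_diff vector_derivative_works unfolding X'_def by blast
  have P': "(P has_vector_derivative P' t) (at t)" for t
    using P_diff vector_derivative_works unfolding P'_def by blast
  have orth: "transpose (X t) ** X t = mat 1" and tangent: "sym_product (X t) (P t) = 0" for t
    using on_TV by (auto simp: in_TStiefel_def sym_product_def)
  have tangent': "sym_product (X t) (P' t) + sym_product (X' t) (P t) = 0" for t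
  proof -
    have "((\<lambda>s. sym_product (X s) (P s)) has_vector_derivative
        sym_product (X t) (P' t) + sym_product (X' t) (P t)) (at t)"
      by (rule bounded_bilinear.has_vector_derivative[OF bounded_bilinear_sym_product X' P'])
    then show ?thesis
      unfolding tangent by (simp add: has_vector_derivative_at_iff_eq[OF has_vector_derivative_const])
  qed
  have Lax_iff: "(\<forall>lam. ((\<lambda>s. Lax_L \<kappa> \<Gamma> lam (X s) (P s)) has_vector_derivative
               (Lax_L \<kappa> \<Gamma> lam (X t) (P t) ** Lax_A \<kappa> \<Gamma> lam (X t) (P t)
                - Lax_A \<kappa> \<Gamma> lam (X t) (P t) ** Lax_L \<kappa> \<Gamma> lam (X t) (P t))) (at t))
     \<longleftrightarrow> X' t = pendulum_X \<kappa> (X t) (P t) \<and> P' t = pendulum_P \<kappa> \<Gamma> (X t) (P t)" for t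
    unfolding has_vector_derivative_at_iff_eq[OF has_vector_derivative_Lax_L[OF X' P']]
      Lax_equation_iff_blocks pendulum_flow_iff_Lax_blocks[OF orth tangent tangent' case_split]
    by (rule refl)
  show ?thesis
    unfolding has_vector_derivative_at_iff_eq[OF X'] has_vector_derivative_at_iff_eq[OF P']
      pendulum_Lambda_def[symmetric] pendulum_P_def[symmetric] pendulum_X_def[symmetric]
    by (subst all_comm) (auto simp: Lax_iff)
qed

end
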